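(* Let $n\ge 1$ and $q>1$. The maximum success probability of any restricted strategy for the New Hats-on-a-line Game with $q$ hat colours and $n$ players is $1-\left(\frac{q-1}{q}\right)^{n}$.
   Context: The New Hats-on-a-line Game with $q$ colours and $n$ players: players $P_1,\dots,P_n$ stand in a line, and each player $P_i$ receives a hat whose colour $c_i$ is chosen uniformly at random from a fixed set of $q$ colours, independently of the other hats. Player $P_i$ sees exactly the hat colours $c_{i+1},\dots,c_n$. The players respond sequentially in the order $P_1,\dots,P_n$; each response is either a colour (a guess of one's own hat colour) or "pass", and each player hears all previous responses. No other communication is allowed, apart from agreeing on a strategy beforehand. A strategy specifies (deterministically), for each player $P_i$, his response as a function of the colours he sees and the responses he has heard. The players win if at least one player guesses correctly and no player guesses incorrectly; the success probability of a strategy is the probability that the players win. A strategy is restricted if, for every configuration of hats $(c_1,\dots,c_n)$, any guess made by a player other than $P_1$ is correct. *)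

theory Defs
  imports Main Complex_Main
begin

text \<open>Colours are 0..q-1. Players P_1..P_n are indexed 0..n-1.
A hat configuration is a list cs of length n with entries < q (cs!i is the hat of player i).
A response is None (pass) or Some k (guess colour k).
A strategy S gives, for player i, his response S i seen heard, where seen = drop (i+1) cs
are the hats he sees and heard is the list of previous responses.\<close>

type_synonym strategy = "nat \<Rightarrow> nat list \<Rightarrow> nat option list \<Rightarrow> nat option"

definition configs :: "nat \<Rightarrow> nat \<Rightarrow> nat list set" where
  "configs q n = {cs. length cs = n \<and> set cs \<subseteq> {..<q}}"

fun resps :: "strategy \<Rightarrow> nat list \<Rightarrow> nat \<Rightarrow> nat option list" where
  "resps S cs 0 = []"
| "resps S cs (Suc k) = resps S cs k @ [S k (drop (Suc k) cs) (resps S cs k)]"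

definition valid_strategy :: "nat \<Rightarrow> strategy \<Rightarrow> bool" where
  "valid_strategy q S \<longleftrightarrow> (\<forall>i seen heard. case S i seen heard of None \<Rightarrow> True | Some k \<Rightarrow> k < q)"

definition wins :: "nat \<Rightarrow> strategy \<Rightarrow> nat list \<Rightarrow> bool" where
  "wins n S cs \<longleftrightarrow>
     (let r = resps S cs n in
       (\<exists>i<n. r ! i = Some (cs ! i)) \<and> (\<forall>i<n. r ! i \<noteq> None \<longrightarrow> r ! i = Some (cs ! i)))"

definition success_prob :: "nat \<Rightarrow> nat \<Rightarrow> strategy \<Rightarrow> real" where
  "success_prob q n S = real (card {cs \<in> configs q n. wins n S cs}) / real (card (configs q n))"

definition restricted :: "nat \<Rightarrow> nat \<Rightarrow> strategy \<Rightarrow> bool" where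
  "restricted q n S \<longleftrightarrow>
     (\<forall>cs \<in> configs q n. \<forall>i. 0 < i \<and> i < n \<longrightarrow>
        resps S cs n ! i \<noteq> None \<longrightarrow> resps S cs n ! i = Some (cs ! i))"

end

theory Submission
  imports Defs
begin

text \<open>
  Player 1's response depends only on the tail u of the configuration. On the tails where
  he guesses, at most one of the q configurations c # u is won; on the tails where he
  passes, the others play a restricted game on u, and each tail won there is won for all q
  values of c. With A the guessing tails and L the tails won after a pass, the number of
  won configurations is at most |A| + q |L|, where |A| + |L| \<le> q^(n-1) and, by induction,
  |L| + (q-1)^(n-1) \<le> q^(n-1); together this gives at least (q-1)^n lost configurations.
  The bound is attained when a player guesses colour 0 exactly if everybody before him
  passed and he sees no hat of colour 0: then the last player wearing colour 0 guesses,
  and the players win iff some hat has colour 0.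
\<close>

text \<open>Relativised to a set P of configurations, because in the induction P shrinks to the
  tails on which player 1 passes.\<close>

definition restricted_on :: "nat list set \<Rightarrow> nat \<Rightarrow> strategy \<Rightarrow> bool" where
  "restricted_on P n S \<longleftrightarrow>
     (\<forall>cs \<in> P. \<forall>i. 0 < i \<and> i < n \<longrightarrow>
        resps S cs n ! i \<noteq> None \<longrightarrow> resps S cs n ! i = Some (cs ! i))"

definition shift_strategy :: "strategy \<Rightarrow> nat option \<Rightarrow> strategy" where
  "shift_strategy S r = (\<lambda>i seen heard. S (Suc i) seen (r # heard))"

lemma configs_eq_lists: "configs q n = {cs. set cs \<subseteq> {..<q} \<and> length cs = n}"
  unfolding configs_def by auto

lemma finite_configs: "finite (configs q n)"
  unfolding configs_eq_lists by (rule finite_lists_length_eq) simp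

lemma card_configs: "card (configs q n) = q ^ n"
  unfolding configs_eq_lists by (simp add: card_lists_length_eq)

lemma Cons_in_configs: "c # u \<in> configs q (Suc m) \<longleftrightarrow> c < q \<and> u \<in> configs q m"
  unfolding configs_def by auto

lemma resps_Cons:
  "resps S (c # u) (Suc k) = S 0 u [] # resps (shift_strategy S (S 0 u [])) u k"
  by (induction k) (auto simp: shift_strategy_def)

lemma wins_Cons_pass:
  assumes "S 0 u [] = None"
  shows "wins (Suc m) S (c # u) \<longleftrightarrow> wins m (shift_strategy S None) u"
  using assms by (simp add: wins_def Let_def resps_Cons All_less_Suc2 Ex_less_Suc2 del: resps.simps(2))

lemma wins_Cons_guess:
  assumes "S 0 u [] = Some k" and "wins (Suc m) S (c # u)"
  shows "k = c"
  using assms by (auto simp: wins_def Let_def resps_Cons All_less_Suc2 simp del: resps.simps(2))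

definition pass_tails :: "nat list set \<Rightarrow> strategy \<Rightarrow> nat list set" where
  "pass_tails P S = {u. S 0 u [] = None \<and> (\<exists>c. c # u \<in> P)}"

lemma pass_tails_subset: "P \<subseteq> configs q (Suc m) \<Longrightarrow> pass_tails P S \<subseteq> configs q m"
  by (auto simp: pass_tails_def Cons_in_configs)

lemma restricted_on_shift_pass:
  assumes "restricted_on P (Suc m) S"
  shows "restricted_on (pass_tails P S) m (shift_strategy S None)"
  unfolding restricted_on_def
proof (intro ballI allI impI)
  fix u i assume "u \<in> pass_tails P S" and i: "0 < i \<and> i < m"
    and guess: "resps (shift_strategy S None) u m ! i \<noteq> None"
  then obtain c where pass: "S 0 u [] = None" and "c # u \<in> P"
    by (auto simp: pass_tails_def)
  with assms i have "resps S (c # u) (Suc m) ! Suc i \<noteq> None \<longrightarrow>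
      resps S (c # u) (Suc m) ! Suc i = Some ((c # u) ! Suc i)"
    unfolding restricted_on_def by blast
  with guess pass show "resps (shift_strategy S None) u m ! i = Some (u ! i)"
    by (simp add: resps_Cons del: resps.simps(2))
qed

lemma card_wins_Cons_le:
  fixes S :: strategy
  assumes "P \<subseteq> configs q (Suc m)"
  defines "A \<equiv> {u \<in> configs q m. S 0 u [] \<noteq> None}"
    and "L \<equiv> {u \<in> pass_tails P S. wins m (shift_strategy S None) u}"
  shows "card {cs \<in> P. wins (Suc m) S cs} \<le> card A + q * card L"
proof -
  have "A \<subseteq> configs q m" "L \<subseteq> configs q m"
    using pass_tails_subset[OF assms(1)] by (auto simp: A_def L_def)
  then have "finite A" "finite L"
    using finite_configs by (auto intro: finite_subset)
  have "{cs \<in> P. wins (Suc m) S cs} \<subseteq> (\<lambda>u. the (S 0 u []) # u) ` A \<union> (\<lambda>(c, u). c # u) ` ({..<q} \<times> L)"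
  proof
    fix cs assume "cs \<in> {cs \<in> P. wins (Suc m) S cs}"
    then obtain c u where cs: "cs = c # u" "c # u \<in> P" and win: "wins (Suc m) S (c # u)"
      using assms(1) by (cases cs) (auto simp: configs_def)
    then have "c < q" "u \<in> configs q m"
      using assms(1) Cons_in_configs by blast+
    show "cs \<in> (\<lambda>u. the (S 0 u []) # u) ` A \<union> (\<lambda>(c, u). c # u) ` ({..<q} \<times> L)"
    proof (cases "S 0 u []")
      case None
      with cs win have "u \<in> L" by (auto simp: L_def pass_tails_def wins_Cons_pass)
      with \<open>c < q\<close> cs show ?thesis by force
    next
      case (Some k)
      with win have "k = c" by (intro wins_Cons_guess)
      with Some \<open>u \<in> configs q m\<close> cs show ?thesis by (force simp: A_def)
    qed
  qed
  then have "card {cs \<in> P. wins (Suc m) S cs}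
      \<le> card ((\<lambda>u. the (S 0 u []) # u) ` A \<union> (\<lambda>(c, u). c # u) ` ({..<q} \<times> L))"
    by (rule card_mono[rotated]) (use \<open>finite A\<close> \<open>finite L\<close> in auto)
  also have "\<dots> \<le> card A + card ({..<q} \<times> L)"
    by (intro card_Un_le[THEN order_trans] add_mono card_image_le) (use \<open>finite A\<close> \<open>finite L\<close> in auto)
  finally show ?thesis by (simp add: card_cartesian_product)
qed

lemma card_wins_restricted_le:
  assumes "0 < q" and "P \<subseteq> configs q m" and "restricted_on P m S"
  shows "card {cs \<in> P. wins m S cs} + (q - 1) ^ m \<le> q ^ m"
  using assms(2,3)
proof (induction m arbitrary: S P)
  case 0
  have "{cs \<in> P. wins 0 S cs} = {}" by (simp add: wins_def)
  then show ?case by (simp only: card.empty) simp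
next
  case (Suc m)
  obtain p where q: "q = Suc p" using \<open>0 < q\<close> gr0_implies_Suc by blast
  define A where "A = {u \<in> configs q m. S 0 u [] \<noteq> None}"
  define L where "L = {u \<in> pass_tails P S. wins m (shift_strategy S None) u}"
  have "pass_tails P S \<subseteq> configs q m"
    using Suc.prems(1) by (rule pass_tails_subset)
  then have IH: "card L + p ^ m \<le> q ^ m"
    unfolding L_def using Suc.IH restricted_on_shift_pass[OF Suc.prems(2)] q by simp
  have "A \<union> L \<subseteq> configs q m"
    using \<open>pass_tails P S \<subseteq> configs q m\<close> by (auto simp: A_def L_def)
  then have "finite A" "finite L"
    using finite_configs by (auto intro: finite_subset)
  have "card A + card L = card (A \<union> L)"
    by (rule card_Un_disjoint[symmetric]) (use \<open>finite A\<close> \<open>finite L\<close> in \<open>auto simp: A_def L_def pass_tails_def\<close>)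
  also have "\<dots> \<le> q ^ m"
    using card_mono[OF finite_configs \<open>A \<union> L \<subseteq> configs q m\<close>] by (simp add: card_configs)
  finally have AL: "card A + card L \<le> q ^ m" .
  have "card {cs \<in> P. wins (Suc m) S cs} \<le> card A + q * card L"
    unfolding A_def L_def using Suc.prems(1) by (rule card_wins_Cons_le)
  then have "card {cs \<in> P. wins (Suc m) S cs} + p ^ Suc m \<le> (card A + card L) + p * (card L + p ^ m)"
    unfolding q by (simp add: algebra_simps)
  also have "\<dots> \<le> q ^ m + p * q ^ m"
    using AL IH by (intro add_mono mult_left_mono) auto
  also have "\<dots> = q ^ Suc m"
    unfolding q by simp
  finally show ?case
    unfolding q by simp
qed

definition last_zero :: "nat list \<Rightarrow> nat" where
  "last_zero cs = Max ({j. j < length cs \<and> cs ! j = 0} \<union> {0})"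

lemma last_zero_cases: "last_zero cs = 0 \<or> last_zero cs < length cs \<and> cs ! last_zero cs = 0"
proof -
  have "last_zero cs \<in> {j. j < length cs \<and> cs ! j = 0} \<union> {0}"
    unfolding last_zero_def by (rule Max_in) auto
  then show ?thesis by auto
qed

lemma nth_last_zero:
  assumes "0 \<in> set cs"
  shows "cs ! last_zero cs = 0"
proof -
  obtain j where j: "j < length cs" "cs ! j = 0"
    using assms by (auto simp: in_set_conv_nth)
  then have "j \<le> last_zero cs"
    unfolding last_zero_def by (intro Max_ge) auto
  with j last_zero_cases[of cs] show ?thesis by auto
qed

lemma zero_in_drop_iff: "0 \<in> set (drop (Suc k) cs) \<longleftrightarrow> k < last_zero cs"
proof -
  have "0 \<in> set (drop (Suc k) cs) \<longleftrightarrow> (\<exists>i. Suc k + i < length cs \<and> cs ! (Suc k + i) = 0)"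
    by (auto simp: in_set_conv_nth less_diff_conv add.commute)
  also have "\<dots> \<longleftrightarrow> (\<exists>j. k < j \<and> j < length cs \<and> cs ! j = 0)"
    by (metis Suc_le_eq le_add1 le_add_diff_inverse)
  also have "\<dots> \<longleftrightarrow> k < last_zero cs"
    unfolding last_zero_def by (subst Max_gr_iff) auto
  finally show ?thesis .
qed

definition guess_zero :: strategy where
  "guess_zero i seen heard = (if (\<forall>r \<in> set heard. r = None) \<and> 0 \<notin> set seen then Some 0 else None)"

lemma resps_guess_zero:
  "k \<le> length cs \<Longrightarrow> resps guess_zero cs k = map (\<lambda>i. if i = last_zero cs then Some 0 else None) [0..<k]"
proof (induction k)
  case (Suc k)
  have "(\<forall>r \<in> set (map (\<lambda>i. if i = last_zero cs then Some 0 else None) [0..<k]). r = None)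
      \<longleftrightarrow> k \<le> last_zero cs"
    by (auto simp: not_less[symmetric])
  with Suc show ?case by (auto simp: guess_zero_def zero_in_drop_iff)
qed simp

lemma nth_resps_guess_zero:
  "i < length cs \<Longrightarrow> resps guess_zero cs (length cs) ! i = (if i = last_zero cs then Some 0 else None)"
  by (simp add: resps_guess_zero)

lemma wins_guess_zero:
  assumes "cs \<noteq> []"
  shows "wins (length cs) guess_zero cs \<longleftrightarrow> 0 \<in> set cs"
proof -
  have "last_zero cs < length cs"
    using assms last_zero_cases[of cs] by auto
  then show ?thesis
    using nth_last_zero[of cs] last_zero_cases[of cs]
    by (auto simp: wins_def nth_resps_guess_zero dest: nth_mem)
qed

lemma valid_guess_zero: "0 < q \<Longrightarrow> valid_strategy q guess_zero"
  by (simp add: valid_strategy_def guess_zero_def)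

lemma restricted_guess_zero: "restricted q n guess_zero"
  unfolding restricted_def
proof (intro ballI allI impI)
  fix cs i assume "cs \<in> configs q n" and i: "0 < i \<and> i < n"
    and "resps guess_zero cs n ! i \<noteq> None"
  then have "i < length cs" "i = last_zero cs"
    by (auto simp: configs_def nth_resps_guess_zero split: if_splits)
  with i last_zero_cases[of cs] show "resps guess_zero cs n ! i = Some (cs ! i)"
    using \<open>cs \<in> configs q n\<close> by (auto simp: configs_def nth_resps_guess_zero)
qed

lemma card_configs_avoiding: "card {cs \<in> configs q n. 0 \<notin> set cs} = (q - 1) ^ n"
proof -
  have "{cs \<in> configs q n. 0 \<notin> set cs} = {cs. set cs \<subseteq> {1..<q} \<and> length cs = n}"
    by (auto simp: configs_def subset_iff Suc_le_eq) (metis gr0I)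
  then show ?thesis by (simp add: card_lists_length_eq)
qed

lemma card_wins_guess_zero:
  assumes "0 < n"
  shows "card {cs \<in> configs q n. wins n guess_zero cs} = q ^ n - (q - 1) ^ n"
proof -
  have "wins n guess_zero cs \<longleftrightarrow> 0 \<in> set cs" if "cs \<in> configs q n" for cs
    using that assms wins_guess_zero[of cs] by (auto simp: configs_def)
  then have "{cs \<in> configs q n. wins n guess_zero cs} = configs q n - {cs \<in> configs q n. 0 \<notin> set cs}"
    by auto
  then show ?thesis
    by (simp add: card_Diff_subset finite_configs card_configs card_configs_avoiding)
qed

lemma success_prob_eq: "success_prob q n S = real (card {cs \<in> configs q n. wins n S cs}) / real (q ^ n)"
  by (simp add: success_prob_def card_configs)

lemma one_minus_power_eq:
  assumes "0 < q"
  shows "1 - ((real q - 1) / real q) ^ n = real (q ^ n - (q - 1) ^ n) / real (q ^ n)"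
proof -
  have "(q - 1) ^ n \<le> q ^ n" by (simp add: power_mono)
  then have "real (q ^ n - (q - 1) ^ n) = real q ^ n - (real q - 1) ^ n"
    using assms by (simp add: of_nat_diff)
  moreover have "real q ^ n > 0" using assms by simp
  ultimately show ?thesis
    unfolding power_divide by (simp add: diff_divide_distrib)
qed

theorem lemma5:
  fixes q n :: nat
  assumes "n \<ge> 1" and "q > 1"
  shows "(\<forall>S. valid_strategy q S \<and> restricted q n S \<longrightarrow>
            success_prob q n S \<le> 1 - ((real q - 1) / real q) ^ n)
       \<and> (\<exists>S. valid_strategy q S \<and> restricted q n S \<and>
            success_prob q n S = 1 - ((real q - 1) / real q) ^ n)"
proof -
  have "0 < q" "0 < n" using assms by simp_all
  have upper: "success_prob q n S \<le> 1 - ((real q - 1) / real q) ^ n" if "restricted q n S" for S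
  proof -
    have "restricted_on (configs q n) n S"
      using that by (simp add: restricted_def restricted_on_def)
    then have "card {cs \<in> configs q n. wins n S cs} \<le> q ^ n - (q - 1) ^ n"
      using card_wins_restricted_le[of q "configs q n" n S] \<open>0 < q\<close> by simp
    then show ?thesis
      unfolding success_prob_eq one_minus_power_eq[OF \<open>0 < q\<close>] by (intro divide_right_mono) auto
  qed
  have "success_prob q n guess_zero = 1 - ((real q - 1) / real q) ^ n"
    unfolding success_prob_eq one_minus_power_eq[OF \<open>0 < q\<close>] card_wins_guess_zero[OF \<open>0 < n\<close>] ..
  then show ?thesis
    using upper valid_guess_zero[OF \<open>0 < q\<close>] restricted_guess_zero by blast
qed

end
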